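(* Let $c\in\mathbb{N}$ and $I=\mathbb{N}\times[c]$. Then for any $\mathrm{Sym}$-invariant lattice $L\subseteq\mathbb{Z}^{(I)}$, the monoid $M=L\cap\mathbb{Z}_{\ge0}^{(I)}$ has a finite equivariant Hilbert basis.
   Context: $\mathbb{N}=\{1,2,\dots\}$. $\mathbb{Z}^{(I)}$ is the free abelian group with basis $I$ (standard basis $\mathbf{e}_{i,j}$), $\mathbb{Z}_{\ge0}^{(I)}$ its nonnegative vectors; a lattice is a subgroup. $\mathrm{Sym}$ is the group of permutations of $\mathbb{N}$ fixing all but finitely many points, acting by linear extension of $\sigma(\mathbf{e}_{i,j})=\mathbf{e}_{\sigma(i),j}$. A Hilbert basis of a monoid is a minimal generating set w.r.t. $\mathbb{Z}_{\ge0}$-linear combinations; $\mathcal{H}\subseteq M$ is an equivariant Hilbert basis if $\mathrm{Sym}(\mathcal{H})=\{\sigma(\mathbf{h})\mid\sigma\in\mathrm{Sym},\mathbf{h}\in\mathcal{H}\}$ is a Hilbert basis of $M$. *)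

theory Defs
  imports Main
begin

text \<open>Vectors of Z^(I), I = N x [c] with N = {1,2,...} and [c] = {1..c}, are
  modelled as finitely supported functions nat x nat => int vanishing outside I.\<close>

definition index_set :: "nat \<Rightarrow> (nat \<times> nat) set" where
  "index_set c = {(i, j). 1 \<le> i \<and> 1 \<le> j \<and> j \<le> c}"

definition Zfin :: "nat \<Rightarrow> (nat \<times> nat \<Rightarrow> int) set" where
  "Zfin c = {v. finite {p. v p \<noteq> 0} \<and> (\<forall>p. v p \<noteq> 0 \<longrightarrow> p \<in> index_set c)}"

definition nonneg_vec :: "(nat \<times> nat \<Rightarrow> int) \<Rightarrow> bool" where
  "nonneg_vec v \<longleftrightarrow> (\<forall>p. 0 \<le> v p)"

text \<open>Sym: permutations of N = {1,2,...} moving only finitely many points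
  (0 is not in N and is kept fixed).\<close>
definition Sym :: "(nat \<Rightarrow> nat) set" where
  "Sym = {\<sigma>. bij \<sigma> \<and> finite {i. \<sigma> i \<noteq> i} \<and> \<sigma> 0 = 0}"

text \<open>Linear extension of sigma(e_(i,j)) = e_(sigma(i),j).\<close>
definition act :: "(nat \<Rightarrow> nat) \<Rightarrow> (nat \<times> nat \<Rightarrow> int) \<Rightarrow> (nat \<times> nat \<Rightarrow> int)" where
  "act \<sigma> v = (\<lambda>(i, j). v (inv \<sigma> i, j))"

definition is_lattice :: "nat \<Rightarrow> (nat \<times> nat \<Rightarrow> int) set \<Rightarrow> bool" where
  "is_lattice c L \<longleftrightarrow> L \<subseteq> Zfin c \<and> (\<lambda>_. 0) \<in> L \<and>
     (\<forall>u\<in>L. \<forall>v\<in>L. (\<lambda>p. u p + v p) \<in> L) \<and> (\<forall>v\<in>L. (\<lambda>p. - v p) \<in> L)"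

definition sym_invariant :: "(nat \<times> nat \<Rightarrow> int) set \<Rightarrow> bool" where
  "sym_invariant L \<longleftrightarrow> (\<forall>\<sigma>\<in>Sym. \<forall>v\<in>L. act \<sigma> v \<in> L)"

inductive_set nn_span :: "(nat \<times> nat \<Rightarrow> int) set \<Rightarrow> (nat \<times> nat \<Rightarrow> int) set"
  for H where
  zero: "(\<lambda>_. 0) \<in> nn_span H"
| add_gen: "h \<in> H \<Longrightarrow> v \<in> nn_span H \<Longrightarrow> (\<lambda>p. h p + v p) \<in> nn_span H"

definition hilbert_basis ::
  "(nat \<times> nat \<Rightarrow> int) set \<Rightarrow> (nat \<times> nat \<Rightarrow> int) set \<Rightarrow> bool" where
  "hilbert_basis M H \<longleftrightarrow> nn_span H = M \<and> (\<forall>H'. H' \<subset> H \<longrightarrow> nn_span H' \<noteq> M)"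

definition sym_orbit :: "(nat \<times> nat \<Rightarrow> int) set \<Rightarrow> (nat \<times> nat \<Rightarrow> int) set" where
  "sym_orbit H = {act \<sigma> h | \<sigma> h. \<sigma> \<in> Sym \<and> h \<in> H}"

definition equivariant_hilbert_basis ::
  "(nat \<times> nat \<Rightarrow> int) set \<Rightarrow> (nat \<times> nat \<Rightarrow> int) set \<Rightarrow> bool" where
  "equivariant_hilbert_basis M H \<longleftrightarrow> H \<subseteq> M \<and> hilbert_basis M (sym_orbit H)"

end

theory Submission
  imports Defs "HOL-Library.Function_Algebras" "HOL-Combinatorics.Permutations"
begin

(* The irreducible elements of M = L \<inter> Z_{\<ge>0}^(I) form the unique Hilbert basis of M, and Sym
   permutes them, so it suffices that they fall into finitely many Sym-orbits.  Otherwise there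
   is a sequence of irreducibles none of which lies in the orbit of an earlier one.  Read each
   vector as a finite multiset of rows in N^c: by Higman's lemma over Dickson's order on N^c
   (proved with a minimal bad sequence) some earlier u and later v satisfy \<sigma> u \<le> v for a
   \<sigma> \<in> Sym.  Then v - \<sigma> u lies in M, and irreducibility of v forces v = \<sigma> u. *)

section \<open>Dickson's lemma and minimal bad sequences\<close>

lemma wellorder_mono_subseq:
  fixes s :: "nat \<Rightarrow> 'a::wellorder"
  obtains \<phi> :: "nat \<Rightarrow> nat" where "strict_mono \<phi>" "mono (s \<circ> \<phi>)"
proof -
  have min_beyond: "\<exists>x>m. \<forall>y>m. s x \<le> s y" for m
  proof -
    have "\<exists>a. \<exists>y>m. s y = a" by blast
    then obtain a where "\<exists>y>m. s y = a" "\<And>b. b < a \<Longrightarrow> \<not> (\<exists>y>m. s y = b)"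
      unfolding exists_least_iff[of "\<lambda>a. \<exists>y>m. s y = a"] by blast
    then show ?thesis using not_le by blast
  qed
  have "\<exists>\<phi>. \<forall>n. (\<forall>y>\<phi> n. s (\<phi> n) \<le> s y) \<and> \<phi> n < \<phi> (Suc n)"
  proof (rule dependent_nat_choice)
    show "\<exists>x. \<forall>y>x. s x \<le> s y"
      using min_beyond[of 0] by (meson less_trans)
    show "\<exists>y. (\<forall>z>y. s y \<le> s z) \<and> x < y" for x
      using min_beyond[of x] by (meson less_trans)
  qed
  then obtain \<phi> :: "nat \<Rightarrow> nat" where \<phi>: "\<And>n. \<forall>y>\<phi> n. s (\<phi> n) \<le> s y" "\<And>n. \<phi> n < \<phi> (Suc n)"
    by blast
  have "strict_mono \<phi>" using \<phi>(2) by (simp add: strict_mono_Suc_iff)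
  moreover have "mono (s \<circ> \<phi>)" using \<phi> unfolding mono_iff_le_Suc by simp
  ultimately show ?thesis by (rule that)
qed

lemma dickson_subseq:
  fixes g :: "nat \<Rightarrow> 'j \<Rightarrow> 'a::wellorder"
  assumes "finite J"
  obtains \<phi> :: "nat \<Rightarrow> nat" where "strict_mono \<phi>" "\<And>j. j \<in> J \<Longrightarrow> mono (\<lambda>n. g (\<phi> n) j)"
  using assms
proof (induction J arbitrary: thesis rule: finite_induct)
  case empty
  show ?case using empty.prems[of "\<lambda>n. n"] by (simp add: strict_mono_def)
next
  case (insert a J)
  obtain \<phi> :: "nat \<Rightarrow> nat" where \<phi>: "strict_mono \<phi>" "\<And>j. j \<in> J \<Longrightarrow> mono (\<lambda>n. g (\<phi> n) j)"
    using insert.IH by blast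
  obtain \<psi> :: "nat \<Rightarrow> nat" where \<psi>: "strict_mono \<psi>" "mono ((\<lambda>n. g (\<phi> n) a) \<circ> \<psi>)"
    by (rule wellorder_mono_subseq)
  have "mono (\<lambda>n. g (\<phi> (\<psi> n)) j)" if "j \<in> J" for j
    using \<phi>(2)[OF that] strict_mono_mono[OF \<psi>(1)] by (simp add: mono_def)
  moreover have "strict_mono (\<phi> \<circ> \<psi>)"
    using \<phi>(1) \<psi>(1) by (simp add: strict_mono_def)
  ultimately show ?case
    using \<psi>(2) by (intro insert.prems[of "\<phi> \<circ> \<psi>"]) (auto simp: o_def)
qed

definition bad_seq :: "'a set \<Rightarrow> ('a \<Rightarrow> 'a \<Rightarrow> bool) \<Rightarrow> (nat \<Rightarrow> 'a) \<Rightarrow> bool" where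
  "bad_seq A R f \<longleftrightarrow> (\<forall>n. f n \<in> A) \<and> (\<forall>i j. i < j \<longrightarrow> \<not> R (f i) (f j))"

lemma minimal_bad_seq:
  fixes w :: "'a \<Rightarrow> nat"
  assumes "bad_seq A R f"
  obtains F where "bad_seq A R F"
    and "\<And>g n. bad_seq A R g \<Longrightarrow> (\<forall>k<n. g k = F k) \<Longrightarrow> w (F n) \<le> w (g n)"
proof -
  define P where "P F n x \<longleftrightarrow> (\<exists>g. bad_seq A R g \<and> (\<forall>k<n. g k = F k) \<and> g n = x \<and>
    (\<forall>g'. bad_seq A R g' \<and> (\<forall>k<n. g' k = F k) \<longrightarrow> w x \<le> w (g' n)))" for F n x
  have "\<exists>F. \<forall>n. P F n (F n)"
  proof (rule dependent_wellorder_choice)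
    show "P F n x = P G n x" if "\<And>k. k < n \<Longrightarrow> F k = G k" for x F G n
      using that unfolding P_def by simp
    show "\<exists>x. P F n x" if prefix: "\<And>k. k < n \<Longrightarrow> P F k (F k)" for F n
    proof -
      have "\<exists>g. bad_seq A R g \<and> (\<forall>k<n. g k = F k)"
      proof (cases n)
        case 0 then show ?thesis using assms by blast
      next
        case (Suc m)
        then obtain g where "bad_seq A R g" "\<forall>k<m. g k = F k" "g m = F m"
          using prefix[of m] unfolding P_def by blast
        then show ?thesis using Suc less_Suc_eq by auto
      qed
      then obtain g where "bad_seq A R g \<and> (\<forall>k<n. g k = F k)"
        "\<And>g'. bad_seq A R g' \<and> (\<forall>k<n. g' k = F k) \<Longrightarrow> w (g n) \<le> w (g' n)"
        using ex_has_least_nat[of "\<lambda>g. bad_seq A R g \<and> (\<forall>k<n. g k = F k)" _ "\<lambda>g. w (g n)"]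
        by blast
      then show ?thesis unfolding P_def by blast
    qed
  qed
  then obtain F where F: "\<And>n. P F n (F n)" by blast
  have "bad_seq A R F"
    unfolding bad_seq_def
  proof (intro conjI allI impI)
    show "F n \<in> A" for n
      using F[of n] unfolding P_def bad_seq_def by metis
    show "\<not> R (F i) (F j)" if "i < j" for i j
      using F[of j] that unfolding P_def bad_seq_def by metis
  qed
  moreover have "w (F n) \<le> w (g n)" if "bad_seq A R g" "\<forall>k<n. g k = F k" for g n
    using F[of n] that unfolding P_def by blast
  ultimately show ?thesis by (rule that)
qed

section \<open>Higman's lemma for row embeddings\<close>

type_synonym vec = "nat \<times> nat \<Rightarrow> int"

definition rows :: "vec \<Rightarrow> nat set" where
  "rows v = {i. \<exists>j. v (i, j) \<noteq> 0}"

definition drop_row :: "vec \<Rightarrow> nat \<Rightarrow> vec" where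
  "drop_row v k = (\<lambda>(i, j). if i = k then 0 else v (i, j))"

text \<open>Higman's embedding of finite multisets of rows, each row ordered componentwise.\<close>
definition row_embeds :: "vec \<Rightarrow> vec \<Rightarrow> bool" where
  "row_embeds u v \<longleftrightarrow> (\<exists>h. inj_on h (rows u) \<and> (\<forall>i\<in>rows u. \<forall>j. u (i, j) \<le> v (h i, j)))"

lemma finite_rows: "v \<in> Zfin c \<Longrightarrow> finite (rows v)"
proof -
  assume "v \<in> Zfin c"
  then have "finite (fst ` {p. v p \<noteq> 0})" by (simp add: Zfin_def)
  moreover have "rows v = fst ` {p. v p \<noteq> 0}" by (force simp: rows_def)
  ultimately show ?thesis by simp
qed

lemma zero_notin_rows: "v \<in> Zfin c \<Longrightarrow> 0 \<notin> rows v"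
  by (auto simp: Zfin_def rows_def index_set_def)

lemma Zfin_outside_columns: "v \<in> Zfin c \<Longrightarrow> j \<notin> {1..c} \<Longrightarrow> v (i, j) = 0"
  by (auto simp: Zfin_def index_set_def)

lemma rows_drop_row: "rows (drop_row v k) = rows v - {k}"
  by (auto simp: rows_def drop_row_def)

lemma drop_row_le: "0 \<le> v \<Longrightarrow> drop_row v k \<le> v"
  by (auto simp: drop_row_def le_fun_def)

lemma drop_row_nonneg: "0 \<le> v \<Longrightarrow> 0 \<le> drop_row v k"
  by (auto simp: drop_row_def le_fun_def)

lemma drop_row_Zfin: "v \<in> Zfin c \<Longrightarrow> drop_row v k \<in> Zfin c"
proof -
  assume v: "v \<in> Zfin c"
  have "{p. drop_row v k p \<noteq> 0} \<subseteq> {p. v p \<noteq> 0}"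
    by (auto simp: drop_row_def split: if_splits)
  with v show ?thesis by (auto simp: Zfin_def drop_row_def intro: finite_subset)
qed

lemma row_le_imp_in_rows:
  assumes "0 \<le> u" "i \<in> rows u" "\<And>j. u (i, j) \<le> v (l, j)"
  shows "l \<in> rows v"
proof -
  obtain j where "u (i, j) \<noteq> 0" using assms(2) by (auto simp: rows_def)
  then have "0 < u (i, j)" using assms(1) by (simp add: le_fun_def order_less_le)
  then have "v (l, j) \<noteq> 0" using assms(3)[of j] by linarith
  then show ?thesis by (auto simp: rows_def)
qed

lemma row_embeds_if_rows_empty: "rows u = {} \<Longrightarrow> row_embeds u v"
  by (auto simp: row_embeds_def)

lemma row_embeds_mono: "row_embeds u v \<Longrightarrow> v \<le> w \<Longrightarrow> row_embeds u w"
  unfolding row_embeds_def le_fun_def by (meson order_trans)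

lemma row_embeds_drop_row:
  assumes "0 \<le> u" "0 \<le> v" and emb: "row_embeds (drop_row u k) (drop_row v l)"
    and row: "\<And>j. u (k, j) \<le> v (l, j)"
  shows "row_embeds u v"
proof -
  let ?S = "rows u - {k}"
  obtain h where h: "inj_on h ?S" "\<And>i j. i \<in> ?S \<Longrightarrow> drop_row u k (i, j) \<le> drop_row v l (h i, j)"
    using emb by (auto simp: row_embeds_def rows_drop_row)
  have h_below: "drop_row u k (i, j) \<le> v (h i, j)" if "i \<in> ?S" for i j
    using h(2)[OF that] drop_row_le[OF assms(2)] by (meson le_fun_def order_trans)
  have "h i \<noteq> l" if "i \<in> ?S" for i
    using row_le_imp_in_rows[OF drop_row_nonneg[OF assms(1)] _ h(2)] that
    by (auto simp: rows_drop_row)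
  then have "inj_on (h(k := l)) (rows u)"
    using h(1) by (auto simp: inj_on_def)
  moreover have "u (i, j) \<le> v ((h(k := l)) i, j)" if "i \<in> rows u" for i j
  proof (cases "i = k")
    case True then show ?thesis using row by simp
  next
    case False
    then show ?thesis using h_below[of i j] that by (simp add: drop_row_def)
  qed
  ultimately show ?thesis unfolding row_embeds_def by blast
qed

lemma bad_seq_drop_rows:
  fixes F :: "nat \<Rightarrow> vec" and \<phi> k :: "nat \<Rightarrow> nat"
  assumes bad: "bad_seq {v \<in> Zfin c. 0 \<le> v} row_embeds F"
    and \<phi>: "strict_mono \<phi>"
    and rows_increase: "\<And>m n j. m \<le> n \<Longrightarrow> F (\<phi> m) (k m, j) \<le> F (\<phi> n) (k n, j)"
  shows "bad_seq {v \<in> Zfin c. 0 \<le> v} row_embeds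
    (\<lambda>n. if n < \<phi> 0 then F n else drop_row (F (\<phi> (n - \<phi> 0))) (k (n - \<phi> 0)))"
    (is "bad_seq ?A _ ?G")
proof -
  have F: "F n \<in> Zfin c" "0 \<le> F n" for n
    using bad by (auto simp: bad_seq_def)
  have F_bad: "\<not> row_embeds (F i) (F j)" if "i < j" for i j
    using bad that by (auto simp: bad_seq_def)
  have "?G n \<in> ?A" for n
    using F drop_row_Zfin drop_row_nonneg by auto
  moreover have "\<not> row_embeds (?G i) (?G j)" if "i < j" for i j
  proof (cases "j < \<phi> 0")
    case True
    then show ?thesis using that F_bad by simp
  next
    case False
    define b where "b = j - \<phi> 0"
    have Gj: "?G j = drop_row (F (\<phi> b)) (k b)"
      using False by (simp add: b_def)
    show ?thesis
    proof (cases "i < \<phi> 0")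
      case True
      have "\<phi> 0 \<le> \<phi> b" using strict_mono_less_eq[OF \<phi>] by simp
      then have "\<not> row_embeds (F i) (F (\<phi> b))" using True F_bad by simp
      then show ?thesis
        using True Gj row_embeds_mono[OF _ drop_row_le[OF F(2)]] by auto
    next
      case False
      define a where "a = i - \<phi> 0"
      have "a < b" using False \<open>i < j\<close> by (simp add: a_def b_def)
      then have "\<not> row_embeds (F (\<phi> a)) (F (\<phi> b))"
        using F_bad strict_mono_less[OF \<phi>] by simp
      moreover have "?G i = drop_row (F (\<phi> a)) (k a)"
        using False by (simp add: a_def)
      ultimately show ?thesis
        using Gj row_embeds_drop_row[OF F(2) F(2) _ rows_increase] \<open>a < b\<close> by fastforce
    qed
  qed
  ultimately show ?thesis by (simp add: bad_seq_def)
qed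

theorem higman_row_embeds:
  fixes f :: "nat \<Rightarrow> vec"
  assumes "\<And>n. f n \<in> Zfin c" "\<And>n. 0 \<le> f n"
  shows "\<exists>i j. i < j \<and> row_embeds (f i) (f j)"
proof (rule ccontr)
  let ?A = "{v \<in> Zfin c. 0 \<le> v}"
  assume "\<not> ?thesis"
  with assms have "bad_seq ?A row_embeds f" by (auto simp: bad_seq_def)
  then obtain F where bad: "bad_seq ?A row_embeds F" and minimal:
    "\<And>g n. bad_seq ?A row_embeds g \<Longrightarrow> \<forall>k<n. g k = F k \<Longrightarrow> card (rows (F n)) \<le> card (rows (g n))"
    by (rule minimal_bad_seq[where w = "\<lambda>v. card (rows v)"]) blast
  have F: "F n \<in> Zfin c" "0 \<le> F n" for n
    using bad by (auto simp: bad_seq_def)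
  have rows_nonempty: "rows (F n) \<noteq> {}" for n
    using bad row_embeds_if_rows_empty[of "F n" "F (Suc n)"] by (auto simp: bad_seq_def)
  define k where "k n = (SOME i. i \<in> rows (F n))" for n
  have k: "k n \<in> rows (F n)" for n
    using rows_nonempty by (simp add: k_def some_in_eq)
  obtain \<phi> :: "nat \<Rightarrow> nat" where \<phi>: "strict_mono \<phi>"
    "\<And>j. j \<in> {1..c} \<Longrightarrow> mono (\<lambda>n. nat (F (\<phi> n) (k (\<phi> n), j)))"
    using dickson_subseq[where J = "{1..c}" and g = "\<lambda>n j. nat (F n (k n, j))"] by blast
  have rows_increase: "F (\<phi> m) (k (\<phi> m), j) \<le> F (\<phi> n) (k (\<phi> n), j)" if "m \<le> n" for m n j
  proof (cases "j \<in> {1..c}")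
    case True
    then have "nat (F (\<phi> m) (k (\<phi> m), j)) \<le> nat (F (\<phi> n) (k (\<phi> n), j))"
      using monoD[OF \<phi>(2)[OF True] that] by simp
    moreover have "0 \<le> F (\<phi> n) (k (\<phi> n), j)" using F(2) by (simp add: le_fun_def)
    ultimately show ?thesis by (simp add: nat_le_eq_zle)
  next
    case False
    then show ?thesis using Zfin_outside_columns[OF F(1)] by simp
  qed
  \<comment> \<open>Dropping the chosen rows from the tail keeps the sequence bad but shrinks \<open>F (\<phi> 0)\<close>.\<close>
  let ?G = "\<lambda>n. if n < \<phi> 0 then F n else drop_row (F (\<phi> (n - \<phi> 0))) (k (\<phi> (n - \<phi> 0)))"
  have "bad_seq ?A row_embeds ?G"
    by (rule bad_seq_drop_rows[OF bad \<phi>(1), where k = "\<lambda>n. k (\<phi> n)"]) (fact rows_increase)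
  then have "card (rows (F (\<phi> 0))) \<le> card (rows (?G (\<phi> 0)))"
    by (rule minimal) simp
  also have "\<dots> = card (rows (F (\<phi> 0)) - {k (\<phi> 0)})"
    by (simp add: rows_drop_row)
  also have "\<dots> < card (rows (F (\<phi> 0)))"
    using finite_rows[OF F(1)] k by (rule card_Diff1_less)
  finally show False by simp
qed

section \<open>The permutation group Sym\<close>

lemma Sym_iff_permutation: "\<sigma> \<in> Sym \<longleftrightarrow> permutation \<sigma> \<and> \<sigma> 0 = 0"
  by (simp add: Sym_def permutation)

lemma Sym_inj: "\<sigma> \<in> Sym \<Longrightarrow> inj \<sigma>"
  by (simp add: Sym_def bij_is_inj)

lemma Sym_inv: "\<sigma> \<in> Sym \<Longrightarrow> inv \<sigma> \<in> Sym"
  by (simp add: Sym_iff_permutation permutation_inverse inv_f_eq Sym_inj)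

lemma Sym_transpose_comp:
  "\<sigma> \<in> Sym \<Longrightarrow> a \<noteq> 0 \<Longrightarrow> b \<noteq> 0 \<Longrightarrow> Transposition.transpose a b \<circ> \<sigma> \<in> Sym"
  by (simp add: Sym_iff_permutation permutation_compose permutation_swap_id)

lemma Sym_extend_inj_on:
  assumes "finite S" "0 \<notin> S" "inj_on h S" "0 \<notin> h ` S"
  obtains \<sigma> where "\<sigma> \<in> Sym" "\<And>i. i \<in> S \<Longrightarrow> \<sigma> i = h i"
  using assms
proof (induction S arbitrary: thesis rule: finite_induct)
  case empty
  have "id \<in> Sym" by (simp add: Sym_def)
  with empty.prems(1) show ?case by blast
next
  case (insert a S)
  obtain \<sigma> where \<sigma>: "\<sigma> \<in> Sym" "\<And>i. i \<in> S \<Longrightarrow> \<sigma> i = h i"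
    using insert.IH insert.prems(2-4) by auto
  have "\<sigma> 0 = 0" using \<sigma>(1) by (simp add: Sym_def)
  then have "\<sigma> a \<noteq> 0"
    using injD[OF Sym_inj[OF \<sigma>(1)], of a 0] insert.prems(2) by auto
  moreover have "h a \<noteq> 0" using insert.prems(4) by auto
  ultimately have "Transposition.transpose (\<sigma> a) (h a) \<circ> \<sigma> \<in> Sym"
    using \<sigma>(1) by (rule Sym_transpose_comp[rotated])
  moreover have "(Transposition.transpose (\<sigma> a) (h a) \<circ> \<sigma>) i = h i" if "i \<in> insert a S" for i
  proof (cases "i = a")
    case False
    with that have "i \<in> S" by simp
    have "h i \<noteq> h a" using inj_onD[OF insert.prems(3)] \<open>i \<in> S\<close> False by blast
    moreover have "\<sigma> i \<noteq> \<sigma> a" using injD[OF Sym_inj[OF \<sigma>(1)]] False by blast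
    ultimately show ?thesis using \<sigma>(2)[OF \<open>i \<in> S\<close>] by simp
  qed simp
  ultimately show ?case by (rule insert.prems(1))
qed

lemma act_apply: "\<sigma> \<in> Sym \<Longrightarrow> act \<sigma> u (\<sigma> i, j) = u (i, j)"
  by (simp add: act_def Sym_inj)

lemma act_inv_act: "\<sigma> \<in> Sym \<Longrightarrow> act (inv \<sigma>) (act \<sigma> u) = u"
  by (simp add: act_def Sym_def inv_inv_eq bij_is_inj)

lemma act_add: "act \<sigma> (u + v) = act \<sigma> u + act \<sigma> v"
  by (auto simp: act_def)

lemma act_eq_0_iff:
  assumes "\<sigma> \<in> Sym"
  shows "act \<sigma> u = 0 \<longleftrightarrow> u = 0"
proof
  assume "act \<sigma> u = 0"
  then have "u (i, j) = 0" for i j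
    using act_apply[OF assms, of u i j] by simp
  then show "u = 0" by fastforce
qed (auto simp: act_def zero_fun_def)

lemma act_nonneg: "0 \<le> u \<Longrightarrow> 0 \<le> act \<sigma> u"
  by (auto simp: act_def le_fun_def)

lemma act_le_if_rows_le:
  assumes "\<sigma> \<in> Sym" "\<And>i j. u (i, j) \<le> v (\<sigma> i, j)"
  shows "act \<sigma> u \<le> v"
proof (rule le_funI)
  fix p :: "nat \<times> nat"
  obtain i' j where p: "p = (i', j)" by fastforce
  have "surj \<sigma>" using assms(1) by (simp add: Sym_def bij_is_surj)
  then obtain i where "i' = \<sigma> i" by (rule surjE)
  then show "act \<sigma> u p \<le> v p" using assms unfolding p by (simp add: act_apply)
qed

lemma row_embeds_imp_act_le:
  assumes u: "u \<in> Zfin c" "0 \<le> u" and v: "v \<in> Zfin c" "0 \<le> v" and "row_embeds u v"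
  obtains \<sigma> where "\<sigma> \<in> Sym" "act \<sigma> u \<le> v"
proof -
  obtain h where h: "inj_on h (rows u)" "\<And>i j. i \<in> rows u \<Longrightarrow> u (i, j) \<le> v (h i, j)"
    using \<open>row_embeds u v\<close> by (auto simp: row_embeds_def)
  have "h ` rows u \<subseteq> rows v"
    using row_le_imp_in_rows[OF u(2) _ h(2)] by blast
  then have "0 \<notin> h ` rows u" using zero_notin_rows[OF v(1)] by blast
  then obtain \<sigma> where \<sigma>: "\<sigma> \<in> Sym" "\<And>i. i \<in> rows u \<Longrightarrow> \<sigma> i = h i"
    using Sym_extend_inj_on[OF finite_rows[OF u(1)] zero_notin_rows[OF u(1)] h(1)] by blast
  have "u (i, j) \<le> v (\<sigma> i, j)" for i j
  proof (cases "i \<in> rows u")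
    case True
    then show ?thesis using h(2) \<sigma>(2) by simp
  next
    case False
    then show ?thesis using v(2) by (simp add: rows_def le_fun_def)
  qed
  then show ?thesis using \<sigma>(1) act_le_if_rows_le that by blast
qed

section \<open>Nonnegative spans and irreducible elements\<close>

(* Defs spells out 0, +, - and \<le> on vectors pointwise; the following lemmas restate its notions
   with the pointwise instances of Function_Algebras, in which the rest of the file is written. *)

lemma nonneg_vec_iff: "nonneg_vec v \<longleftrightarrow> 0 \<le> v"
  by (simp add: nonneg_vec_def le_fun_def)

lemma is_lattice_closed:
  assumes "is_lattice c L"
  shows "L \<subseteq> Zfin c" "0 \<in> L" "u \<in> L \<Longrightarrow> v \<in> L \<Longrightarrow> u + v \<in> L"
    and "u \<in> L \<Longrightarrow> v \<in> L \<Longrightarrow> u - v \<in> L"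
proof -
  have sub: "L \<subseteq> Zfin c" and zero: "(\<lambda>_. 0) \<in> L"
    and add: "\<And>u v. u \<in> L \<Longrightarrow> v \<in> L \<Longrightarrow> (\<lambda>p. u p + v p) \<in> L"
    and neg: "\<And>v. v \<in> L \<Longrightarrow> (\<lambda>p. - v p) \<in> L"
    using assms unfolding is_lattice_def by blast+
  show "L \<subseteq> Zfin c" by (fact sub)
  show "0 \<in> L" using zero by (simp add: zero_fun_def)
  show "u + v \<in> L" if "u \<in> L" "v \<in> L" using add[OF that] by (simp add: plus_fun_def)
  show "u - v \<in> L" if "u \<in> L" "v \<in> L"
    using add[OF that(1) neg[OF that(2)]] by (simp add: fun_diff_def)
qed

lemma nn_span_induct [consumes 1, case_names zero add_gen]:
  assumes "x \<in> nn_span H" "P 0"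
    and "\<And>h v. h \<in> H \<Longrightarrow> v \<in> nn_span H \<Longrightarrow> P v \<Longrightarrow> P (h + v)"
  shows "P x"
  using assms(1)
proof (induction rule: nn_span.induct)
  case zero
  then show ?case using assms(2) by (simp add: zero_fun_def)
next
  case (add_gen h v)
  then show ?case using assms(3)[of h v] by (simp add: plus_fun_def)
qed

lemma nn_span_zero: "0 \<in> nn_span H"
  unfolding zero_fun_def by (rule nn_span.zero)

lemma nn_span_add_gen: "h \<in> H \<Longrightarrow> v \<in> nn_span H \<Longrightarrow> h + v \<in> nn_span H"
  unfolding plus_fun_def by (rule nn_span.add_gen)

lemma nn_span_base: "h \<in> H \<Longrightarrow> h \<in> nn_span H"
  using nn_span_add_gen[OF _ nn_span_zero] by simp

lemma nn_span_add: "u \<in> nn_span H \<Longrightarrow> w \<in> nn_span H \<Longrightarrow> u + w \<in> nn_span H"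
proof (induction u rule: nn_span_induct)
  case zero
  then show ?case by simp
next
  case (add_gen h v)
  then have "h + (v + w) \<in> nn_span H" by (blast intro: nn_span_add_gen)
  then show ?case by (simp only: add.assoc)
qed

lemma nn_span_subset:
  assumes "0 \<in> M" "\<And>a b. a \<in> M \<Longrightarrow> b \<in> M \<Longrightarrow> a + b \<in> M" "H \<subseteq> M"
  shows "nn_span H \<subseteq> M"
proof
  fix v assume "v \<in> nn_span H"
  then show "v \<in> M"
    by (induction v rule: nn_span_induct) (use assms in blast)+
qed

definition irreducibles :: "'a::monoid_add set \<Rightarrow> 'a set" where
  "irreducibles M = {v \<in> M. v \<noteq> 0 \<and> (\<forall>a\<in>M. \<forall>b\<in>M. v = a + b \<longrightarrow> a = 0 \<or> b = 0)}"

lemma irreducibles_subset: "irreducibles M \<subseteq> M"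
  by (auto simp: irreducibles_def)

definition mass :: "vec \<Rightarrow> nat" where
  "mass v = nat (\<Sum>p | v p \<noteq> 0. v p)"

lemma mass_less_add:
  assumes "finite {p. a p \<noteq> 0}" "finite {p. b p \<noteq> 0}" "0 \<le> a" "0 \<le> b" "a \<noteq> 0"
  shows "mass b < mass (a + b)"
proof -
  let ?S = "{p. a p \<noteq> 0} \<union> {p. b p \<noteq> 0}"
  have fin: "finite ?S" using assms(1,2) by simp
  have nonneg: "0 \<le> a p" "0 \<le> b p" for p
    using le_funD[OF assms(3), of p] le_funD[OF assms(4), of p] by simp_all
  have sum_support: "(\<Sum>p | v p \<noteq> 0. v p) = sum v ?S" if "{p. v p \<noteq> 0} \<subseteq> ?S" for v :: vec
    by (rule sum.mono_neutral_left[OF fin that]) auto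
  have sum_b: "(\<Sum>p | b p \<noteq> 0. b p) = sum b ?S"
    by (rule sum_support) auto
  have "{p. (a + b) p \<noteq> 0} \<subseteq> ?S" by auto
  then have sum_ab: "(\<Sum>p | (a + b) p \<noteq> 0. (a + b) p) = sum a ?S + sum b ?S"
    by (subst sum_support) (simp_all add: sum.distrib)
  obtain q where "a q \<noteq> 0" using assms(5) by (auto simp: fun_eq_iff)
  then have "0 < a q" "q \<in> ?S" using nonneg(1)[of q] by auto
  moreover have "a q \<le> sum a ?S"
    by (rule member_le_sum[OF \<open>q \<in> ?S\<close> _ fin]) (simp add: nonneg)
  ultimately have "0 < sum a ?S" by linarith
  moreover have "0 \<le> sum b ?S" using nonneg(2) by (simp add: sum_nonneg)
  ultimately show ?thesis using sum_b sum_ab by (simp add: mass_def nat_less_eq_zless)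
qed

lemma subset_nn_span_irreducibles:
  assumes "M \<subseteq> {v \<in> Zfin c. 0 \<le> v}"
  shows "M \<subseteq> nn_span (irreducibles M)"
proof
  fix v assume "v \<in> M"
  then show "v \<in> nn_span (irreducibles M)"
  proof (induction v rule: measure_induct_rule[where f = mass])
    case (less v)
    consider "v = 0" | "v \<in> irreducibles M"
      | a b where "a \<in> M" "b \<in> M" "v = a + b" "a \<noteq> 0" "b \<noteq> 0"
      using less.prems by (auto simp: irreducibles_def)
    then show ?case
    proof cases
      case 1
      then show ?thesis using nn_span_zero by (simp only:)
    next
      case 2
      then show ?thesis by (rule nn_span_base)
    next
      case 3
      have fin: "finite {p. w p \<noteq> 0}" "0 \<le> w" if "w \<in> M" for w
        using assms that by (auto simp: Zfin_def)
      have "mass b < mass v" "mass a < mass v"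
        using mass_less_add[of a b] mass_less_add[of b a] fin[OF 3(1)] fin[OF 3(2)] 3(3-5)
        by (simp_all add: add.commute)
      then have "a \<in> nn_span (irreducibles M)" "b \<in> nn_span (irreducibles M)"
        using less.IH 3(1,2) by blast+
      then show ?thesis
        unfolding 3(3) by (rule nn_span_add)
    qed
  qed
qed

lemma irreducibles_subset_generators:
  assumes "nn_span G = M"
  shows "irreducibles M \<subseteq> G"
proof
  fix x assume x: "x \<in> irreducibles M"
  then have "x \<in> nn_span G" using assms irreducibles_subset by blast
  then show "x \<in> G" using x
  proof (induction x rule: nn_span_induct)
    case zero
    then show ?case unfolding irreducibles_def by blast
  next
    case (add_gen h v)
    have "h \<in> M" "v \<in> M" using add_gen.hyps nn_span_base assms by blast+
    then have "h = 0 \<or> v = 0"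
      using add_gen.prems unfolding irreducibles_def by blast
    then show ?case
    proof
      assume "h = 0"
      then show ?thesis using add_gen.IH add_gen.prems by (simp only: add_0_left)
    next
      assume "v = 0"
      then show ?thesis using add_gen.hyps(1) by (simp only: add_0_right)
    qed
  qed
qed

lemma hilbert_basis_irreducibles:
  assumes "M \<subseteq> {v \<in> Zfin c. 0 \<le> v}" "0 \<in> M" "\<And>a b. a \<in> M \<Longrightarrow> b \<in> M \<Longrightarrow> a + b \<in> M"
  shows "hilbert_basis M (irreducibles M)"
proof -
  have "nn_span (irreducibles M) = M"
    using nn_span_subset[OF assms(2,3) irreducibles_subset] subset_nn_span_irreducibles[OF assms(1)]
    by blast
  then show ?thesis
    unfolding hilbert_basis_def using irreducibles_subset_generators by blast
qed

section \<open>Finitely many orbits of irreducible elements\<close>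

lemma act_irreducibles:
  assumes invariant: "\<And>\<sigma> v. \<sigma> \<in> Sym \<Longrightarrow> v \<in> M \<Longrightarrow> act \<sigma> v \<in> M"
    and \<sigma>: "\<sigma> \<in> Sym" and v: "v \<in> irreducibles M"
  shows "act \<sigma> v \<in> irreducibles M"
proof -
  have vM: "v \<in> M" "v \<noteq> 0"
    and v_irr: "\<And>a b. a \<in> M \<Longrightarrow> b \<in> M \<Longrightarrow> v = a + b \<Longrightarrow> a = 0 \<or> b = 0"
    using v unfolding irreducibles_def by blast+
  have \<tau>: "inv \<sigma> \<in> Sym" using \<sigma> by (rule Sym_inv)
  have "a = 0 \<or> b = 0" if "a \<in> M" "b \<in> M" "act \<sigma> v = a + b" for a b
  proof -
    have "v = act (inv \<sigma>) (a + b)" using act_inv_act[OF \<sigma>, of v] that(3) by simp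
    also have "\<dots> = act (inv \<sigma>) a + act (inv \<sigma>) b" by (rule act_add)
    finally have "act (inv \<sigma>) a = 0 \<or> act (inv \<sigma>) b = 0"
      using v_irr invariant[OF \<tau>] that(1,2) by blast
    then show ?thesis using act_eq_0_iff[OF \<tau>] by blast
  qed
  moreover have "act \<sigma> v \<in> M" "act \<sigma> v \<noteq> 0"
    using invariant[OF \<sigma> vM(1)] act_eq_0_iff[OF \<sigma>] vM(2) by blast+
  ultimately show ?thesis unfolding irreducibles_def by blast
qed

lemma sym_orbit_subset:
  assumes "\<And>\<sigma> v. \<sigma> \<in> Sym \<Longrightarrow> v \<in> A \<Longrightarrow> act \<sigma> v \<in> A" "H \<subseteq> A"
  shows "sym_orbit H \<subseteq> A"
  using assms unfolding sym_orbit_def by blast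

lemma irreducible_eq_act_if_le:
  assumes L: "is_lattice c L" "sym_invariant L"
    and u: "u \<in> irreducibles {v \<in> L. 0 \<le> v}" and v: "v \<in> irreducibles {v \<in> L. 0 \<le> v}"
    and \<sigma>: "\<sigma> \<in> Sym" and le: "act \<sigma> u \<le> v"
  shows "v = act \<sigma> u"
proof -
  let ?M = "{v \<in> L. 0 \<le> v}"
  have uM: "u \<in> L" "0 \<le> u" and vM: "v \<in> L" "0 \<le> v"
    using u v irreducibles_subset by blast+
  have "act \<sigma> u \<in> ?M"
    using L(2) \<sigma> uM act_nonneg unfolding sym_invariant_def by blast
  moreover have "v - act \<sigma> u \<in> ?M"
    using is_lattice_closed(4)[OF L(1) vM(1)] calculation le by simp
  moreover have "act \<sigma> u \<noteq> 0"
    using act_eq_0_iff[OF \<sigma>] u unfolding irreducibles_def by blast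
  moreover have "v = act \<sigma> u + (v - act \<sigma> u)" by simp
  ultimately have "v - act \<sigma> u = 0"
    using v unfolding irreducibles_def by blast
  then show ?thesis by simp
qed

lemma seq_avoiding_finite_closures:
  assumes "\<And>H. finite H \<Longrightarrow> H \<subseteq> A \<Longrightarrow> \<not> A \<subseteq> cl H"
  shows "\<exists>f :: nat \<Rightarrow> 'a. \<forall>n. f n \<in> A \<and> f n \<notin> cl (f ` {..<n})"
proof -
  define P where "P f n r \<longleftrightarrow> r \<in> A \<and> r \<notin> cl (f ` {..<n})" for f and n :: nat and r
  have "\<exists>f. \<forall>n. P f n (f n)"
  proof (rule dependent_wellorder_choice)
    show "P f n r = P g n r" if "\<And>k. k < n \<Longrightarrow> f k = g k" for r f g n
    proof -
      have "f ` {..<n} = g ` {..<n}" using that by (intro image_cong) auto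
      then show ?thesis by (simp add: P_def)
    qed
    show "\<exists>r. P f n r" if "\<And>k. k < n \<Longrightarrow> P f k (f k)" for f n
      using assms[of "f ` {..<n}"] that unfolding P_def by blast
  qed
  then show ?thesis unfolding P_def by blast
qed

lemma finitely_many_orbits_irreducibles:
  assumes "is_lattice c L" "sym_invariant L"
  shows "\<exists>H. finite H \<and> H \<subseteq> irreducibles {v \<in> L. 0 \<le> v} \<and>
    irreducibles {v \<in> L. 0 \<le> v} \<subseteq> sym_orbit H"
    (is "\<exists>H. finite H \<and> H \<subseteq> ?I \<and> ?I \<subseteq> sym_orbit H")
proof (rule ccontr)
  assume "\<not> ?thesis"
  then have "\<not> ?I \<subseteq> sym_orbit H" if "finite H" "H \<subseteq> ?I" for H
    using that by blast
  then have "\<exists>f. \<forall>n::nat. f n \<in> ?I \<and> f n \<notin> sym_orbit (f ` {..<n})"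
    by (rule seq_avoiding_finite_closures)
  then obtain f :: "nat \<Rightarrow> vec"
    where f: "\<And>n. f n \<in> ?I" "\<And>n. f n \<notin> sym_orbit (f ` {..<n})"
    by blast
  have f_Zfin: "f n \<in> Zfin c" "0 \<le> f n" for n
  proof -
    have "f n \<in> L" "0 \<le> f n" using f(1)[of n] irreducibles_subset by blast+
    then show "f n \<in> Zfin c" "0 \<le> f n" using is_lattice_closed(1)[OF assms(1)] by blast+
  qed
  obtain i j where "i < j" "row_embeds (f i) (f j)"
    using higman_row_embeds[of f, OF f_Zfin] by blast
  then obtain \<sigma> where \<sigma>: "\<sigma> \<in> Sym" "act \<sigma> (f i) \<le> f j"
    by (elim row_embeds_imp_act_le[OF f_Zfin(1,2) f_Zfin(1,2), rotated])
  have "f j = act \<sigma> (f i)"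
    by (rule irreducible_eq_act_if_le[OF assms f(1) f(1) \<sigma>])
  moreover have "f i \<in> f ` {..<j}" using \<open>i < j\<close> by simp
  ultimately have "f j \<in> sym_orbit (f ` {..<j})"
    using \<sigma>(1) unfolding sym_orbit_def by blast
  with f(2) show False by blast
qed

theorem lemma4p13:
  fixes c :: nat and L :: "(nat \<times> nat \<Rightarrow> int) set"
  assumes "1 \<le> c"
    and "is_lattice c L"
    and "sym_invariant L"
  shows "\<exists>H. finite H \<and> equivariant_hilbert_basis {v \<in> L. nonneg_vec v} H"
proof -
  let ?M = "{v \<in> L. 0 \<le> v}"
  obtain H where H: "finite H" "H \<subseteq> irreducibles ?M" "irreducibles ?M \<subseteq> sym_orbit H"
    using finitely_many_orbits_irreducibles[OF assms(2,3)] by blast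
  have invariant: "act \<sigma> v \<in> ?M" if "\<sigma> \<in> Sym" "v \<in> ?M" for \<sigma> v
    using assms(3) that act_nonneg[of v \<sigma>] by (simp add: sym_invariant_def)
  have "sym_orbit H \<subseteq> irreducibles ?M"
    by (rule sym_orbit_subset[OF act_irreducibles[OF invariant] H(2)])
  then have orbit: "sym_orbit H = irreducibles ?M"
    using H(3) by (rule subset_antisym)
  have "hilbert_basis ?M (irreducibles ?M)"
  proof (rule hilbert_basis_irreducibles)
    show "?M \<subseteq> {v \<in> Zfin c. 0 \<le> v}" using is_lattice_closed(1)[OF assms(2)] by blast
    show "0 \<in> ?M" using is_lattice_closed(2)[OF assms(2)] by simp
    show "a + b \<in> ?M" if "a \<in> ?M" "b \<in> ?M" for a b
      using is_lattice_closed(3)[OF assms(2)] add_nonneg_nonneg that by blast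
  qed
  then have "equivariant_hilbert_basis ?M H"
    unfolding equivariant_hilbert_basis_def orbit using H(2) irreducibles_subset by blast
  then show ?thesis
    using H(1) unfolding nonneg_vec_iff by blast
qed

end
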